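(* For any graph $\Gamma$, the polygraph monoid $P(\Gamma)=IH^0(M(\Gamma))$ is strongly $F^*$-inverse.
   Context: A graph $\Gamma=(V,E)$ has vertex set $V$ and irreflexive symmetric edge relation $E$. The graph monoid $M(\Gamma)$ is the monoid presented by $\langle x_v\ (v\in V)\mid x_ux_v=x_vx_u \text{ for } (u,v)\in E\rangle$. For a right cancellative monoid $D$ and $a\in D$, $\rho_a:D\to D$, $x\mapsto xa$, is regarded as a partial bijection of $D$; the inverse hull $IH(D)$ is the inverse submonoid of the symmetric inverse monoid on $D$ generated by all $\rho_a$, and $IH^0(D)=IH(D)\cup\{\emptyset\}$ (the empty map being a zero). In an inverse monoid, the natural partial order is $a\le b$ iff $a=eb$ for some idempotent $e$. An inverse monoid $S$ is $F^*$-inverse if every nonzero element (every element, if $S$ has no zero) lies beneath a unique maximal element in the natural partial order. $S$ is strongly $E^*$-unitary if there is a group $G$ and a function $\theta:S\to G^0$ ($G$ with a zero adjoined) such that $a\theta=0$ iff $a$ is the zero of $S$, $a\theta=1$ iff $a$ is a nonzero idempotent, and $(ab)\theta=(a\theta)(b\theta)$ whenever $ab$ is not zero. $S$ is strongly $F^*$-inverse if it is both $F^*$-inverse and strongly $E^*$-unitary. *)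

theory Defs
  imports "HOL-Algebra.Group"
begin

definition trace_step :: "('v \<Rightarrow> 'v \<Rightarrow> bool) \<Rightarrow> 'v list \<Rightarrow> 'v list \<Rightarrow> bool" where
  "trace_step E xs ys \<longleftrightarrow>
     (\<exists>us a b ws. E a b \<and> xs = us @ [a, b] @ ws \<and> ys = us @ [b, a] @ ws)"

definition trace_eq :: "('v \<Rightarrow> 'v \<Rightarrow> bool) \<Rightarrow> 'v list \<Rightarrow> 'v list \<Rightarrow> bool" where
  "trace_eq E = (\<lambda>xs ys. trace_step E xs ys \<or> trace_step E ys xs)\<^sup>*\<^sup>*"

definition gm_class :: "('v \<Rightarrow> 'v \<Rightarrow> bool) \<Rightarrow> 'v list \<Rightarrow> 'v list set" where
  "gm_class E xs = {ys. trace_eq E xs ys}"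

definition graph_monoid :: "'v set \<Rightarrow> ('v \<Rightarrow> 'v \<Rightarrow> bool) \<Rightarrow> 'v list set set" where
  "graph_monoid V E = gm_class E ` lists V"

definition gm_mult :: "('v \<Rightarrow> 'v \<Rightarrow> bool) \<Rightarrow> 'v list set \<Rightarrow> 'v list set \<Rightarrow> 'v list set" where
  "gm_mult E X Y = {zs. \<exists>xs\<in>X. \<exists>ys\<in>Y. trace_eq E (xs @ ys) zs}"

text \<open>Partial maps act on the right: x(fg) = (xf)g.\<close>
definition pmult :: "('a \<rightharpoonup> 'a) \<Rightarrow> ('a \<rightharpoonup> 'a) \<Rightarrow> ('a \<rightharpoonup> 'a)" where
  "pmult f g = g \<circ>\<^sub>m f"

definition pid :: "'a set \<Rightarrow> ('a \<rightharpoonup> 'a)" where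
  "pid D = (\<lambda>x. if x \<in> D then Some x else None)"

definition pinv :: "('a \<rightharpoonup> 'a) \<Rightarrow> ('a \<rightharpoonup> 'a)" where
  "pinv f = (\<lambda>y. if y \<in> ran f then Some (THE x. f x = Some y) else None)"

definition right_translation :: "'a set \<Rightarrow> ('a \<Rightarrow> 'a \<Rightarrow> 'a) \<Rightarrow> 'a \<Rightarrow> ('a \<rightharpoonup> 'a)" where
  "right_translation D op a = (\<lambda>x. if x \<in> D then Some (op x a) else None)"

inductive_set inv_submonoid_gen :: "'a set \<Rightarrow> ('a \<rightharpoonup> 'a) set \<Rightarrow> ('a \<rightharpoonup> 'a) set"
  for D :: "'a set" and gens :: "('a \<rightharpoonup> 'a) set" where
  gen_id: "pid D \<in> inv_submonoid_gen D gens"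
| gen_gen: "f \<in> gens \<Longrightarrow> f \<in> inv_submonoid_gen D gens"
| gen_mult: "f \<in> inv_submonoid_gen D gens \<Longrightarrow> g \<in> inv_submonoid_gen D gens
      \<Longrightarrow> pmult f g \<in> inv_submonoid_gen D gens"
| gen_inv: "f \<in> inv_submonoid_gen D gens \<Longrightarrow> pinv f \<in> inv_submonoid_gen D gens"

definition inverse_hull :: "'a set \<Rightarrow> ('a \<Rightarrow> 'a \<Rightarrow> 'a) \<Rightarrow> ('a \<rightharpoonup> 'a) set" where
  "inverse_hull D op = inv_submonoid_gen D (right_translation D op ` D)"

definition inverse_hull0 :: "'a set \<Rightarrow> ('a \<Rightarrow> 'a \<Rightarrow> 'a) \<Rightarrow> ('a \<rightharpoonup> 'a) set" where
  "inverse_hull0 D op = insert Map.empty (inverse_hull D op)"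

definition polygraph_monoid ::
  "'v set \<Rightarrow> ('v \<Rightarrow> 'v \<Rightarrow> bool) \<Rightarrow> ('v list set \<rightharpoonup> 'v list set) set" where
  "polygraph_monoid V E = inverse_hull0 (graph_monoid V E) (gm_mult E)"

definition is_zero :: "'a set \<Rightarrow> ('a \<Rightarrow> 'a \<Rightarrow> 'a) \<Rightarrow> 'a \<Rightarrow> bool" where
  "is_zero S op z \<longleftrightarrow> z \<in> S \<and> (\<forall>x\<in>S. op z x = z \<and> op x z = z)"

definition nat_le :: "'a set \<Rightarrow> ('a \<Rightarrow> 'a \<Rightarrow> 'a) \<Rightarrow> 'a \<Rightarrow> 'a \<Rightarrow> bool" where
  "nat_le S op a b \<longleftrightarrow> (\<exists>e\<in>S. op e e = e \<and> a = op e b)"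

definition F_star_inverse :: "'a set \<Rightarrow> ('a \<Rightarrow> 'a \<Rightarrow> 'a) \<Rightarrow> bool" where
  "F_star_inverse S op \<longleftrightarrow>
     (\<forall>a\<in>S. \<not> is_zero S op a \<longrightarrow>
        (\<exists>!m. m \<in> S \<and> nat_le S op a m \<and> (\<forall>n\<in>S. nat_le S op m n \<longrightarrow> n = m)))"

text \<open>Multiplication in G^0 (None plays the role of the adjoined zero).\<close>
definition zmult :: "('g, 'b) monoid_scheme \<Rightarrow> 'g option \<Rightarrow> 'g option \<Rightarrow> 'g option" where
  "zmult G x y = (case (x, y) of (Some g, Some h) \<Rightarrow> Some (g \<otimes>\<^bsub>G\<^esub> h) | _ \<Rightarrow> None)"

definition strongly_E_star_unitary_wrt ::
  "('g, 'b) monoid_scheme \<Rightarrow> 'a set \<Rightarrow> ('a \<Rightarrow> 'a \<Rightarrow> 'a) \<Rightarrow> bool" where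
  "strongly_E_star_unitary_wrt G S op \<longleftrightarrow>
     (\<exists>\<theta> :: 'a \<Rightarrow> 'g option.
        (\<forall>a\<in>S. \<forall>g. \<theta> a = Some g \<longrightarrow> g \<in> carrier G) \<and>
        (\<forall>a\<in>S. \<theta> a = None \<longleftrightarrow> is_zero S op a) \<and>
        (\<forall>a\<in>S. \<theta> a = Some \<one>\<^bsub>G\<^esub> \<longleftrightarrow> (\<not> is_zero S op a \<and> op a a = a)) \<and>
        (\<forall>a\<in>S. \<forall>b\<in>S. \<not> is_zero S op (op a b) \<longrightarrow>
            \<theta> (op a b) = zmult G (\<theta> a) (\<theta> b)))"

text \<open>Existence of a suitable group; w.l.o.g. its elements are taken from the type 'a list
  (the subgroup generated by the image of theta has cardinality at most that of 'a list).\<close>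
definition strongly_E_star_unitary :: "'a set \<Rightarrow> ('a \<Rightarrow> 'a \<Rightarrow> 'a) \<Rightarrow> bool" where
  "strongly_E_star_unitary S op \<longleftrightarrow>
     (\<exists>G :: 'a list monoid. group G \<and> strongly_E_star_unitary_wrt G S op)"

definition strongly_F_star_inverse :: "'a set \<Rightarrow> ('a \<Rightarrow> 'a \<Rightarrow> 'a) \<Rightarrow> bool" where
  "strongly_F_star_inverse S op \<longleftrightarrow> F_star_inverse S op \<and> strongly_E_star_unitary S op"

end

theory Submission
  imports Defs "HOL-Algebra.Bij" "HOL-Library.Countable" "HOL-Library.Sublist"
begin

text \<open>Apart from the zero, the polygraph monoid consists of the maps \<open>\<rho>\<^sub>a\<^sup>-\<^sup>1\<rho>\<^sub>b\<close> sending [x a]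
  to [x b]. By the projection lemma the graph monoid is cancellative, any two of its elements
  have a greatest common left divisor, and two elements with a common left multiple have a
  least one. The last fact shows that a product of two such maps is again of this form. The
  natural partial order is restriction of partial maps, and the greatest element above
  \<open>\<rho>\<^sub>a\<^sup>-\<^sup>1\<rho>\<^sub>b\<close> is obtained by replacing a and b by a' and b', where a = g a', b = g b' and g is
  the greatest common left divisor of a and b.

  For strong \<open>E\<^sup>*\<close>-unitarity take \<open>\<theta>(\<rho>\<^sub>a\<^sup>-\<^sup>1\<rho>\<^sub>b) = \<iota>(a)\<^sup>-\<^sup>1\<iota>(b)\<close>, where \<open>\<iota>\<close> embeds the graph
  monoid into a group of permutations: on the component of a pair s, t of non-adjacent
  letters, s and t act on the rationals by x \<mapsto> 3x + 1 and x \<mapsto> 3x + 2, which records the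
  projection of a word onto {s, t} in base 3.\<close>

section \<open>Trace monoids\<close>

definition pair_proj :: "'v \<Rightarrow> 'v \<Rightarrow> 'v list \<Rightarrow> 'v list" where
  "pair_proj s t = filter (\<lambda>x. x = s \<or> x = t)"

lemma pair_proj_simps [simp]:
  "pair_proj s t [] = []"
  "pair_proj s t (x # w) = (if x = s \<or> x = t then x # pair_proj s t w else pair_proj s t w)"
  "pair_proj s t (u @ w) = pair_proj s t u @ pair_proj s t w"
  by (auto simp: pair_proj_def)

lemma set_pair_proj: "set (pair_proj s t w) = set w \<inter> {s, t}"
  by (auto simp: pair_proj_def)

locale independence =
  fixes E :: "'v \<Rightarrow> 'v \<Rightarrow> bool"
  assumes irrefl: "\<not> E u u"
    and sym: "E u v \<Longrightarrow> E v u"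
begin

abbreviation trace_equiv :: "'v list \<Rightarrow> 'v list \<Rightarrow> bool" (infix \<open>\<simeq>\<close> 50) where
  "xs \<simeq> ys \<equiv> trace_eq E xs ys"

lemma trace_equiv_refl [simp]: "xs \<simeq> xs"
  by (simp add: trace_eq_def)

lemma trace_equiv_sym: "xs \<simeq> ys \<Longrightarrow> ys \<simeq> xs"
proof -
  have "symp (\<lambda>xs ys. trace_step E xs ys \<or> trace_step E ys xs)"
    by (auto simp: symp_def)
  then have "symp (trace_eq E)"
    unfolding trace_eq_def by (rule symp_rtranclp)
  then show "xs \<simeq> ys \<Longrightarrow> ys \<simeq> xs"
    by (auto dest: sympD)
qed

lemma trace_equiv_trans: "xs \<simeq> ys \<Longrightarrow> ys \<simeq> zs \<Longrightarrow> xs \<simeq> zs"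
  unfolding trace_eq_def by (rule rtranclp_trans)

lemma trace_equiv_invariant:
  assumes "xs \<simeq> ys" and "\<And>xs ys. trace_step E xs ys \<Longrightarrow> f xs = f ys"
  shows "f xs = f ys"
  using assms(1) unfolding trace_eq_def
  by (induction rule: rtranclp_induct) (auto dest: assms(2))

lemma trace_equiv_map_step:
  assumes "xs \<simeq> ys" and "\<And>xs ys. trace_step E xs ys \<Longrightarrow> trace_step E (f xs) (f ys)"
  shows "f xs \<simeq> f ys"
  using assms(1) unfolding trace_eq_def
proof (induction rule: rtranclp_induct)
  case (step y z)
  then show ?case by (metis (mono_tags, lifting) assms(2) rtranclp.rtrancl_into_rtrancl)
qed simp

lemma trace_equiv_append: "xs \<simeq> xs' \<Longrightarrow> ys \<simeq> ys' \<Longrightarrow> xs @ ys \<simeq> xs' @ ys'"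
proof -
  have ctx: "xs \<simeq> ys \<Longrightarrow> p @ xs @ q \<simeq> p @ ys @ q" for xs ys p q
    by (erule trace_equiv_map_step) (unfold trace_step_def, metis append.assoc)
  show "xs \<simeq> xs' \<Longrightarrow> ys \<simeq> ys' \<Longrightarrow> xs @ ys \<simeq> xs' @ ys'"
    using ctx[of xs xs' "[]" ys] ctx[of ys ys' xs' "[]"] trace_equiv_trans by auto
qed

lemma trace_equiv_Cons: "xs \<simeq> ys \<Longrightarrow> c # xs \<simeq> c # ys"
  using trace_equiv_append[of "[c]" "[c]" xs ys] by simp

lemma trace_equiv_rev: "xs \<simeq> ys \<Longrightarrow> rev xs \<simeq> rev ys"
proof (erule trace_equiv_map_step)
  fix xs ys assume "trace_step E xs ys"
  then obtain us a b ws where "E a b" "xs = us @ [a, b] @ ws" "ys = us @ [b, a] @ ws"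
    unfolding trace_step_def by blast
  then show "trace_step E (rev xs) (rev ys)"
    unfolding trace_step_def
    by (intro exI[of _ "rev ws"] exI[of _ b] exI[of _ a] exI[of _ "rev us"]) (auto intro: sym)
qed

lemma trace_equiv_set: "xs \<simeq> ys \<Longrightarrow> set xs = set ys"
  by (erule trace_equiv_invariant) (auto simp: trace_step_def)

lemma trace_equiv_length: "xs \<simeq> ys \<Longrightarrow> length xs = length ys"
  by (erule trace_equiv_invariant) (auto simp: trace_step_def)

lemma trace_equiv_pair_proj: "xs \<simeq> ys \<Longrightarrow> \<not> E s t \<Longrightarrow> pair_proj s t xs = pair_proj s t ys"
  by (erule trace_equiv_invariant) (auto simp: trace_step_def dest: sym)

lemma trace_equiv_swap: "E a b \<Longrightarrow> a # b # w \<simeq> b # a # w"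
  unfolding trace_eq_def trace_step_def
  by (rule r_into_rtranclp) (rule disjI1, rule exI[of _ "[]"], auto)

lemma trace_equiv_commute: "\<forall>l\<in>set u. E c l \<Longrightarrow> u @ [c] \<simeq> c # u"
proof (induction u)
  case (Cons l u)
  then have "(l # u) @ [c] \<simeq> l # c # u"
    using trace_equiv_Cons by auto
  moreover have "l # c # u \<simeq> c # l # u"
    using Cons.prems by (auto intro: trace_equiv_swap sym)
  ultimately show ?case
    using trace_equiv_trans by blast
qed simp

lemma trace_equiv_Cons_append_commute: "\<forall>l\<in>set u. E c l \<Longrightarrow> c # u @ s \<simeq> u @ c # s"
  using trace_equiv_append[OF trace_equiv_commute trace_equiv_refl[of s]]
  by (simp add: trace_equiv_sym)

text \<open>The projection lemma: traces, and left divisibility of traces, are detected by their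
  projections onto the pairs of dependent letters.\<close>
lemma trace_prefix_if_pair_proj_prefix:
  assumes "\<And>s t. \<not> E s t \<Longrightarrow> prefix (pair_proj s t u) (pair_proj s t w)"
  shows "\<exists>v. w \<simeq> u @ v"
  using assms
proof (induction u arbitrary: w)
  case Nil
  then show ?case by (auto intro: exI[of _ w])
next
  case (Cons c u)
  from Cons.prems[of c c] have "c \<in> set w"
    using irrefl by (auto simp: pair_proj_def dest: set_mono_prefix)
  then obtain w1 w2 where w: "w = w1 @ c # w2" and c_notin: "c \<notin> set w1"
    by (metis split_list_first)
  have commute: "\<forall>l\<in>set w1. E c l"
  proof
    fix l assume l: "l \<in> set w1"
    show "E c l"
    proof (rule ccontr)
      assume "\<not> E c l"
      then have "prefix (pair_proj l c (c # u)) (pair_proj l c w)"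
        using Cons.prems sym by blast
      moreover have "pair_proj l c w1 \<noteq> []"
        using l by (auto simp: pair_proj_def filter_empty_conv)
      then obtain h hs where h: "pair_proj l c w1 = h # hs"
        by (cases "pair_proj l c w1") auto
      then have "h \<in> set w1"
        by (metis IntD1 list.set_intros(1) set_pair_proj)
      ultimately show False
        using c_notin w h by auto
    qed
  qed
  have w_equiv: "w \<simeq> c # w1 @ w2"
    using trace_equiv_Cons_append_commute[OF commute, of w2] w by (simp add: trace_equiv_sym)
  have "prefix (pair_proj s t u) (pair_proj s t (w1 @ w2))" if st: "\<not> E s t" for s t
    using Cons.prems[OF st] trace_equiv_pair_proj[OF w_equiv st] by (auto split: if_splits)
  with Cons.IH obtain v where "w1 @ w2 \<simeq> u @ v"
    by blast
  then show ?case
    using trace_equiv_trans[OF w_equiv trace_equiv_Cons] by auto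
qed

lemma trace_equiv_iff_pair_proj:
  "u \<simeq> w \<longleftrightarrow> (\<forall>s t. \<not> E s t \<longrightarrow> pair_proj s t u = pair_proj s t w)"
proof (intro iffI allI impI)
  assume proj: "\<forall>s t. \<not> E s t \<longrightarrow> pair_proj s t u = pair_proj s t w"
  then obtain v where v: "w \<simeq> u @ v"
    using trace_prefix_if_pair_proj_prefix[of u w] by fastforce
  have no_letter: "pair_proj s s v = []" for s
    using trace_equiv_pair_proj[OF v, of s s] proj irrefl by simp
  have "v = []"
  proof (cases v)
    case (Cons y ys)
    with no_letter[of y] show ?thesis by simp
  qed simp
  with v show "u \<simeq> w"
    by (simp add: trace_equiv_sym)
qed (rule trace_equiv_pair_proj)

lemma trace_equiv_append_cancel_left: "a @ x \<simeq> a @ y \<Longrightarrow> x \<simeq> y"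
  by (auto simp: trace_equiv_iff_pair_proj)

lemma trace_equiv_append_cancel_right: "x @ a \<simeq> y @ a \<Longrightarrow> x \<simeq> y"
  by (auto simp: trace_equiv_iff_pair_proj)

definition ldvd :: "'v list \<Rightarrow> 'v list \<Rightarrow> bool" (infix \<open>\<preceq>\<close> 50) where
  "u \<preceq> w \<longleftrightarrow> (\<exists>v. w \<simeq> u @ v)"

lemma ldvd_iff_pair_proj: "u \<preceq> w \<longleftrightarrow> (\<forall>s t. \<not> E s t \<longrightarrow> prefix (pair_proj s t u) (pair_proj s t w))"
  unfolding ldvd_def
  by (metis prefixI trace_prefix_if_pair_proj_prefix trace_equiv_pair_proj pair_proj_simps(3))

lemma ldvd_refl [simp]: "u \<preceq> u"
  unfolding ldvd_def by (rule exI[of _ "[]"]) simp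

lemma ldvd_Nil [simp]: "[] \<preceq> u"
  unfolding ldvd_def by (rule exI[of _ u]) simp

lemma ldvd_append [simp]: "u \<preceq> u @ v"
  unfolding ldvd_def by (rule exI[of _ v]) simp

lemma letter_ldvd_Cons [simp]: "[c] \<preceq> c # u"
  using ldvd_append[of "[c]" u] by simp

lemma ldvd_trans: "u \<preceq> v \<Longrightarrow> v \<preceq> w \<Longrightarrow> u \<preceq> w"
  unfolding ldvd_iff_pair_proj using prefix_order.order_trans by blast

lemma ldvd_cong_right: "w \<simeq> w' \<Longrightarrow> u \<preceq> w \<longleftrightarrow> u \<preceq> w'"
  unfolding ldvd_iff_pair_proj by (simp add: trace_equiv_pair_proj)

lemma ldvd_cong_left: "u \<simeq> u' \<Longrightarrow> u \<preceq> w \<longleftrightarrow> u' \<preceq> w"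
  unfolding ldvd_iff_pair_proj by (simp add: trace_equiv_pair_proj)

lemma Cons_ldvd_Cons: "c # u \<preceq> c # w \<longleftrightarrow> u \<preceq> w"
  unfolding ldvd_iff_pair_proj by auto

lemma letter_ldvd_commute:
  assumes d: "[d] \<preceq> x" and h: "h \<preceq> x" and not_dvd: "\<not> [d] \<preceq> h"
  shows "(\<forall>l\<in>set h. E d l) \<and> d # h \<preceq> x"
proof -
  from not_dvd obtain s t where st: "\<not> E s t" and "\<not> prefix (pair_proj s t [d]) (pair_proj s t h)"
    unfolding ldvd_iff_pair_proj by blast
  then have d_st: "d = s \<or> d = t"
    by (auto split: if_splits)
  have "prefix [d] (pair_proj s t x)" "prefix (pair_proj s t h) (pair_proj s t x)"
    using d h st d_st unfolding ldvd_iff_pair_proj by force+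
  then have "pair_proj s t h = []"
    using \<open>\<not> prefix (pair_proj s t [d]) (pair_proj s t h)\<close> d_st
    by (cases "pair_proj s t h") (auto dest: prefix_same_cases)
  then have d_notin: "d \<notin> set h"
    using d_st set_pair_proj[of s t h] by auto
  have commute: "\<forall>l\<in>set h. E d l"
  proof
    fix l assume l: "l \<in> set h"
    show "E d l"
    proof (rule ccontr)
      assume dl: "\<not> E d l"
      then have "prefix [d] (pair_proj d l x)" "prefix (pair_proj d l h) (pair_proj d l x)"
        using d h unfolding ldvd_iff_pair_proj by force+
      moreover have "pair_proj d l h \<noteq> []"
        using l by (auto simp: pair_proj_def filter_empty_conv)
      then obtain y ys where y: "pair_proj d l h = y # ys"
        by (cases "pair_proj d l h") auto
      then have "y \<in> set h"
        by (metis IntD1 list.set_intros(1) set_pair_proj)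
      ultimately show False
        using d_notin y by (auto dest: prefix_same_cases)
    qed
  qed
  have "prefix (pair_proj s t (d # h)) (pair_proj s t x)" if st: "\<not> E s t" for s t
  proof (cases "d = s \<or> d = t")
    case True
    have "pair_proj s t h = []"
    proof (rule ccontr)
      assume "pair_proj s t h \<noteq> []"
      then obtain l where "l \<in> set h" "l = s \<or> l = t"
        by (auto simp: pair_proj_def filter_empty_conv)
      then show False
        using commute d_notin st True sym by metis
    qed
    then show ?thesis
      using d st True unfolding ldvd_iff_pair_proj by force
  next
    case False
    then show ?thesis
      using h st unfolding ldvd_iff_pair_proj by simp
  qed
  with commute show ?thesis
    unfolding ldvd_iff_pair_proj by blast
qed

lemma ldvd_Cons_quotient:
  assumes "[d] \<preceq> x" and "c \<preceq> x"
  shows "\<exists>c'. \<forall>z. c \<preceq> d # z \<longleftrightarrow> c' \<preceq> z"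
proof (cases "[d] \<preceq> c")
  case True
  then obtain c' where "c \<simeq> d # c'"
    unfolding ldvd_def by auto
  then show ?thesis
    using ldvd_cong_left Cons_ldvd_Cons by blast
next
  case False
  with assms have commute: "\<forall>l\<in>set c. E d l"
    by (blast dest: letter_ldvd_commute)
  have "c \<preceq> d # z \<longleftrightarrow> c \<preceq> z" for z
  proof
    assume "c \<preceq> d # z"
    then show "c \<preceq> z"
      using letter_ldvd_commute[OF _ _ False, of "d # z"] by (simp add: Cons_ldvd_Cons)
  next
    assume "c \<preceq> z"
    then obtain s where "z \<simeq> c @ s"
      unfolding ldvd_def by blast
    then have "d # z \<simeq> c @ d # s"
      using trace_equiv_trans[OF trace_equiv_Cons trace_equiv_Cons_append_commute[OF commute]] by blast
    then show "c \<preceq> d # z"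
      unfolding ldvd_def by blast
  qed
  then show ?thesis
    by blast
qed

lemma left_gcd_exists: "\<exists>g. g \<preceq> a \<and> g \<preceq> b \<and> (\<forall>h. h \<preceq> a \<longrightarrow> h \<preceq> b \<longrightarrow> h \<preceq> g)"
proof (induction "length a" arbitrary: a b rule: less_induct)
  case less
  show ?case
  proof (cases "\<exists>c a' b'. a \<simeq> c # a' \<and> b \<simeq> c # b'")
    case True
    then obtain c a' b' where a: "a \<simeq> c # a'" and b: "b \<simeq> c # b'"
      by blast
    have "length a' < length a"
      using trace_equiv_length[OF a] by simp
    with less obtain g where g: "g \<preceq> a'" "g \<preceq> b'" "\<forall>h. h \<preceq> a' \<longrightarrow> h \<preceq> b' \<longrightarrow> h \<preceq> g"
      by blast
    show ?thesis
    proof (intro exI conjI allI impI)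
      show "c # g \<preceq> a" "c # g \<preceq> b"
        using g(1,2) ldvd_cong_right[OF a] ldvd_cong_right[OF b] by (simp_all add: Cons_ldvd_Cons)
      fix h assume h: "h \<preceq> a" "h \<preceq> b"
      moreover have "[c] \<preceq> a"
        using a unfolding ldvd_def by auto
      ultimately obtain h' where h': "\<forall>z. h \<preceq> c # z \<longleftrightarrow> h' \<preceq> z"
        using ldvd_Cons_quotient by blast
      then show "h \<preceq> c # g"
        using g(3) h ldvd_cong_right[OF a] ldvd_cong_right[OF b] by auto
    qed
  next
    case False
    have "h = []" if "h \<preceq> a" "h \<preceq> b" for h
    proof (cases h)
      case (Cons c h')
      then have "[c] \<preceq> a" "[c] \<preceq> b"
        using that ldvd_trans[of "[c]" h] by auto
      then show ?thesis
        using False unfolding ldvd_def by auto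
    qed
    then show ?thesis
      by (intro exI[of _ "[]"]) fastforce
  qed
qed

lemma left_lcm_exists:
  "b \<preceq> x \<Longrightarrow> c \<preceq> x \<Longrightarrow> \<exists>w. b \<preceq> w \<and> c \<preceq> w \<and> (\<forall>y. b \<preceq> y \<longrightarrow> c \<preceq> y \<longrightarrow> w \<preceq> y)"
proof (induction b arbitrary: c x)
  case Nil
  then show ?case
    by (intro exI[of _ c]) auto
next
  case (Cons d b)
  from Cons.prems(1) obtain r where r: "x \<simeq> d # b @ r"
    unfolding ldvd_def by auto
  have "[d] \<preceq> x"
    using Cons.prems(1) ldvd_trans[of "[d]" "d # b"] by simp
  then obtain c' where c': "\<forall>z. c \<preceq> d # z \<longleftrightarrow> c' \<preceq> z"
    using Cons.prems(2) ldvd_Cons_quotient by blast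
  then have "c' \<preceq> b @ r"
    using Cons.prems(2) ldvd_cong_right[OF r] by simp
  with Cons.IH obtain w where w: "b \<preceq> w" "c' \<preceq> w" "\<forall>y. b \<preceq> y \<longrightarrow> c' \<preceq> y \<longrightarrow> w \<preceq> y"
    using ldvd_append by blast
  show ?case
  proof (intro exI[of _ "d # w"] conjI allI impI)
    show "d # b \<preceq> d # w" "c \<preceq> d # w"
      using w(1,2) c' by (simp_all add: Cons_ldvd_Cons)
    fix y assume y: "d # b \<preceq> y" "c \<preceq> y"
    then obtain s where s: "y \<simeq> d # b @ s"
      unfolding ldvd_def by auto
    then have "c' \<preceq> b @ s"
      using c' y(2) ldvd_cong_right[OF s] by simp
    then show "d # w \<preceq> y"
      using w(3) ldvd_cong_right[OF s] by (simp add: Cons_ldvd_Cons)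
  qed
qed

definition rdvd :: "'v list \<Rightarrow> 'v list \<Rightarrow> bool" where
  "rdvd u w \<longleftrightarrow> (\<exists>v. w \<simeq> v @ u)"

lemma rdvd_iff_ldvd_rev: "rdvd u w \<longleftrightarrow> rev u \<preceq> rev w"
  unfolding rdvd_def ldvd_def
  by (metis rev_append rev_rev_ident trace_equiv_rev)

lemma right_lcm_exists:
  assumes "rdvd b x" and "rdvd c x"
  shows "\<exists>w. rdvd b w \<and> rdvd c w \<and> (\<forall>y. rdvd b y \<longrightarrow> rdvd c y \<longrightarrow> rdvd w y)"
proof -
  obtain w where "rev b \<preceq> w" "rev c \<preceq> w" "\<forall>y. rev b \<preceq> y \<longrightarrow> rev c \<preceq> y \<longrightarrow> w \<preceq> y"
    using left_lcm_exists assms unfolding rdvd_iff_ldvd_rev by blast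
  then show ?thesis
    unfolding rdvd_iff_ldvd_rev by (metis rev_rev_ident)
qed


lemma least_common_left_multiple:
  assumes "x @ b \<simeq> y @ c"
  obtains u v where "u @ b \<simeq> v @ c" and "\<And>x y. x @ b \<simeq> y @ c \<Longrightarrow> \<exists>s. x \<simeq> s @ u \<and> y \<simeq> s @ v"
proof -
  have bound: "rdvd b (x @ b)" "rdvd c (x @ b)" if "x @ b \<simeq> y @ c" for x y
    using that unfolding rdvd_def by (blast intro: trace_equiv_refl)+
  obtain w where w: "rdvd b w" "rdvd c w" "\<And>z. rdvd b z \<Longrightarrow> rdvd c z \<Longrightarrow> rdvd w z"
    using right_lcm_exists[OF bound[OF assms]] by blast
  obtain u v where u: "w \<simeq> u @ b" and v: "w \<simeq> v @ c"
    using w(1,2) unfolding rdvd_def by blast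
  show ?thesis
  proof (rule that)
    show "u @ b \<simeq> v @ c"
      using u v trace_equiv_sym trace_equiv_trans by blast
    fix x y assume xy: "x @ b \<simeq> y @ c"
    then obtain s where s: "x @ b \<simeq> s @ w"
      using w(3) bound unfolding rdvd_def by blast
    have "x @ b \<simeq> (s @ u) @ b"
      using trace_equiv_trans[OF s trace_equiv_append[OF trace_equiv_refl u]] by simp
    moreover have "y @ c \<simeq> (s @ v) @ c"
      using trace_equiv_trans[OF trace_equiv_sym[OF xy] trace_equiv_trans[OF s
          trace_equiv_append[OF trace_equiv_refl v]]] by simp
    ultimately show "\<exists>s. x \<simeq> s @ u \<and> y \<simeq> s @ v"
      using trace_equiv_append_cancel_right by blast
  qed
qed
end

section \<open>A faithful action of the trace monoid by permutations\<close>

definition ternary_code :: "'v \<Rightarrow> 'v list \<Rightarrow> int" where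
  "ternary_code s w = foldr (\<lambda>v c. 3 * c + (if v = s then 1 else 2)) w 0"

lemma ternary_code_simps [simp]:
  "ternary_code s [] = 0"
  "ternary_code s (v # w) = 3 * ternary_code s w + (if v = s then 1 else 2)"
  by (simp_all add: ternary_code_def)

lemma ternary_code_nonneg: "ternary_code s w \<ge> 0"
  by (induction w) auto

lemma ternary_code_Cons_pos: "ternary_code s (v # w) > 0"
  using ternary_code_nonneg[of s w] by simp

lemma ternary_code_inj:
  "set u \<subseteq> {s, t} \<Longrightarrow> set w \<subseteq> {s, t} \<Longrightarrow> ternary_code s u = ternary_code s w \<Longrightarrow> u = w"
proof (induction u arbitrary: w)
  case Nil
  then show ?case
    by (metis less_irrefl list.exhaust ternary_code_Cons_pos ternary_code_simps(1))
next
  case (Cons v u)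
  then obtain v' w' where w: "w = v' # w'"
    by (metis less_irrefl list.exhaust ternary_code_Cons_pos ternary_code_simps(1))
  have "(v = s) = (v' = s)"
    using Cons.prems(3) unfolding w by (auto split: if_splits; presburger)
  moreover from this have "ternary_code s u = ternary_code s w'"
    using Cons.prems(3) unfolding w by (auto split: if_splits)
  then have "u = w'"
    using Cons.IH[of w'] Cons.prems(1,2) unfolding w by simp
  ultimately show ?case
    using Cons.prems(1,2) unfolding w by auto
qed

context independence
begin

definition letter_action :: "'v \<Rightarrow> 'v \<times> 'v \<times> rat \<Rightarrow> 'v \<times> 'v \<times> rat" where
  "letter_action v = (\<lambda>(s, t, q). (s, t, if \<not> E s t \<and> (v = s \<or> v = t)
     then 3 * q + (if v = s then 1 else 2) else q))"

lemma bij_letter_action: "bij (letter_action v)"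
proof (rule o_bij)
  let ?inv = "\<lambda>(s, t, q). (s, t, if \<not> E s t \<and> (v = s \<or> v = t)
     then (q - (if v = s then 1 else 2)) / 3 else q) :: 'v \<times> 'v \<times> rat"
  show "?inv \<circ> letter_action v = id" "letter_action v \<circ> ?inv = id"
    by (auto simp: letter_action_def fun_eq_iff field_simps)
qed

lemma letter_action_commute:
  assumes "E a b"
  shows "letter_action a \<circ> letter_action b = letter_action b \<circ> letter_action a"
proof
  fix x :: "'v \<times> 'v \<times> rat"
  obtain s t q where x: "x = (s, t, q)"
    by (cases x) auto
  have "\<not> ((a = s \<or> a = t) \<and> (b = s \<or> b = t) \<and> \<not> E s t)"
    using assms irrefl sym by blast
  then show "(letter_action a \<circ> letter_action b) x = (letter_action b \<circ> letter_action a) x"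
    unfolding x by (auto simp: letter_action_def)
qed

definition word_action :: "'v list \<Rightarrow> 'v \<times> 'v \<times> rat \<Rightarrow> 'v \<times> 'v \<times> rat" where
  "word_action w = foldr (\<lambda>v f. letter_action v \<circ> f) w id"

lemma word_action_simps [simp]:
  "word_action [] = id"
  "word_action (v # w) = letter_action v \<circ> word_action w"
  by (simp_all add: word_action_def)

lemma word_action_append: "word_action (u @ w) = word_action u \<circ> word_action w"
  by (induction u) (auto simp: o_assoc)

lemma bij_word_action: "bij (word_action w)"
proof (induction w)
  case (Cons v w)
  then show ?case
    unfolding word_action_simps by (rule bij_comp[OF _ bij_letter_action])
qed (metis bij_id id_def word_action_simps(1))

lemma word_action_on_pair:
  "\<not> E s t \<Longrightarrow> word_action w (s, t, 0) = (s, t, of_int (ternary_code s (pair_proj s t w)))"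
  by (induction w) (auto simp: letter_action_def)

lemma word_action_eq_iff: "word_action u = word_action w \<longleftrightarrow> u \<simeq> w"
proof
  assume eq: "word_action u = word_action w"
  show "u \<simeq> w"
    unfolding trace_equiv_iff_pair_proj
  proof (intro allI impI)
    fix s t assume "\<not> E s t"
    then have "ternary_code s (pair_proj s t u) = ternary_code s (pair_proj s t w)"
      using word_action_on_pair[of s t u] word_action_on_pair[of s t w] eq by simp
    then show "pair_proj s t u = pair_proj s t w"
      using ternary_code_inj[of "pair_proj s t u" s t "pair_proj s t w"] by (auto simp: set_pair_proj)
  qed
next
  assume "u \<simeq> w"
  then show "word_action u = word_action w"
  proof (rule trace_equiv_invariant)
    fix xs ys assume "trace_step E xs ys"
    then obtain us a b ws where "E a b" "xs = us @ [a, b] @ ws" "ys = us @ [b, a] @ ws"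
      unfolding trace_step_def by blast
    moreover from \<open>E a b\<close> have "word_action [a, b] = word_action [b, a]"
      using letter_action_commute by simp
    ultimately show "word_action xs = word_action ys"
      by (simp only: word_action_append)
  qed
qed

end

section \<open>Inverse monoids of partial bijections\<close>

lemma map_eqI: "(\<And>x y. f x = Some y \<longleftrightarrow> g x = Some y) \<Longrightarrow> f = g"
  by (rule ext) (metis not_Some_eq)

lemma pmult_Some: "pmult f g x = Some z \<longleftrightarrow> (\<exists>y. f x = Some y \<and> g y = Some z)"
  unfolding pmult_def map_comp_def by (auto split: option.splits)

lemma pmult_empty [simp]: "pmult Map.empty g = Map.empty" "pmult g Map.empty = Map.empty"
  unfolding pmult_def map_comp_def by (auto split: option.splits)

lemma pinv_empty [simp]: "pinv Map.empty = Map.empty"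
  unfolding pinv_def by auto

lemma inj_on_dom_Some: "inj_on f (dom f) \<Longrightarrow> f x = Some z \<Longrightarrow> f y = Some z \<Longrightarrow> x = y"
  by (metis domI inj_on_def)

lemma pinv_Some:
  assumes "inj_on f (dom f)"
  shows "pinv f y = Some x \<longleftrightarrow> f x = Some y"
proof -
  have the_eq: "(THE x. f x = Some y) = x0" if "f x0 = Some y" for x0
    using that assms by (intro the_equality) (auto dest: inj_on_dom_Some)
  show ?thesis
  proof
    assume "pinv f y = Some x"
    then obtain x0 where "f x0 = Some y" "x = (THE x. f x = Some y)"
      unfolding pinv_def ran_def by (auto split: if_splits)
    then show "f x = Some y"
      using the_eq by simp
  next
    assume "f x = Some y"
    then show "pinv f y = Some x"
      using the_eq unfolding pinv_def ran_def by auto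
  qed
qed

lemma pmult_pinv_Some:
  assumes "inj_on f (dom f)"
  shows "pmult f (pinv f) x = Some y \<longleftrightarrow> y = x \<and> x \<in> dom f"
  using assms unfolding pmult_Some pinv_Some[OF assms] by (auto dest: inj_on_dom_Some)

lemma idempotent_map_le_id:
  assumes "inj_on e (dom e)" and "pmult e e = e" and "e x = Some y"
  shows "y = x"
proof -
  obtain z where "e x = Some z" "e z = Some y"
    using assms(2,3) pmult_Some by metis
  with assms show ?thesis
    by (auto dest: inj_on_dom_Some)
qed

locale partial_bijection_monoid =
  fixes S :: "('a \<rightharpoonup> 'a) set"
  assumes inj_dom: "f \<in> S \<Longrightarrow> inj_on f (dom f)"
    and pmult_closed: "f \<in> S \<Longrightarrow> g \<in> S \<Longrightarrow> pmult f g \<in> S"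
    and pinv_closed: "f \<in> S \<Longrightarrow> pinv f \<in> S"
    and empty_mem: "Map.empty \<in> S"
begin

lemma is_zero_iff: "f \<in> S \<Longrightarrow> is_zero S pmult f \<longleftrightarrow> f = Map.empty"
  unfolding is_zero_def using empty_mem by force

lemma nat_le_iff_map_le:
  assumes "f \<in> S" and "h \<in> S"
  shows "nat_le S pmult f h \<longleftrightarrow> f \<subseteq>\<^sub>m h"
proof
  assume "nat_le S pmult f h"
  then obtain e where e: "e \<in> S" "pmult e e = e" "f = pmult e h"
    unfolding nat_le_def by blast
  show "f \<subseteq>\<^sub>m h"
    unfolding map_le_def
  proof
    fix x assume "x \<in> dom f"
    then obtain z where z: "f x = Some z"
      by blast
    then obtain y where y: "e x = Some y" "h y = Some z"
      using e(3) pmult_Some by metis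
    then show "f x = h x"
      using idempotent_map_le_id[OF inj_dom[OF e(1)] e(2) y(1)] z by simp
  qed
next
  assume le: "f \<subseteq>\<^sub>m h"
  let ?e = "pmult f (pinv f)"
  have "?e \<in> S"
    using assms pmult_closed pinv_closed by blast
  moreover have e_Some: "?e x = Some y \<longleftrightarrow> y = x \<and> x \<in> dom f" for x y
    using pmult_pinv_Some[OF inj_dom[OF assms(1)]] .
  have "pmult ?e ?e = ?e"
    by (rule map_eqI) (auto simp only: pmult_Some[of ?e] e_Some)
  moreover have "pmult ?e h = f"
    using le unfolding map_le_def
    by (intro map_eqI) (auto simp only: pmult_Some[of ?e] e_Some, (metis domI option.inject)+)
  ultimately show "nat_le S pmult f h"
    unfolding nat_le_def by metis
qed

lemma F_star_inverse_if_greatest_above: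
  assumes "\<And>f. f \<in> S \<Longrightarrow> f \<noteq> Map.empty \<Longrightarrow>
      \<exists>m\<in>S. f \<subseteq>\<^sub>m m \<and> (\<forall>n\<in>S. f \<subseteq>\<^sub>m n \<longrightarrow> n \<subseteq>\<^sub>m m)"
  shows "F_star_inverse S pmult"
  unfolding F_star_inverse_def
proof (intro ballI impI)
  fix f assume "f \<in> S" "\<not> is_zero S pmult f"
  with assms is_zero_iff obtain m where m: "m \<in> S" "f \<subseteq>\<^sub>m m" "\<forall>n\<in>S. f \<subseteq>\<^sub>m n \<longrightarrow> n \<subseteq>\<^sub>m m"
    by blast
  show "\<exists>!m. m \<in> S \<and> nat_le S pmult f m \<and> (\<forall>n\<in>S. nat_le S pmult m n \<longrightarrow> n = m)"
  proof (rule ex1I[of _ m])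
    have "n = m" if "n \<in> S" "m \<subseteq>\<^sub>m n" for n
      using m that map_le_trans[OF m(2)] by (blast intro: map_le_antisym)
    then show "m \<in> S \<and> nat_le S pmult f m \<and> (\<forall>n\<in>S. nat_le S pmult m n \<longrightarrow> n = m)"
      using m \<open>f \<in> S\<close> by (auto simp: nat_le_iff_map_le)
  next
    fix m' assume "m' \<in> S \<and> nat_le S pmult f m' \<and> (\<forall>n\<in>S. nat_le S pmult m' n \<longrightarrow> n = m')"
    with m \<open>f \<in> S\<close> show "m' = m"
      by (auto simp: nat_le_iff_map_le)
  qed
qed

end

section \<open>Group embeddings\<close>

definition transport_monoid :: "('g \<Rightarrow> 'b) \<Rightarrow> ('g, 'c) monoid_scheme \<Rightarrow> 'b monoid" where
  "transport_monoid h G =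
    \<lparr>carrier = h ` carrier G,
     mult = \<lambda>x y. h (inv_into (carrier G) h x \<otimes>\<^bsub>G\<^esub> inv_into (carrier G) h y),
     one = h \<one>\<^bsub>G\<^esub>\<rparr>"

lemma hom_transport_monoid:
  assumes "group G" and "inj_on h (carrier G)"
  shows "h \<in> hom G (transport_monoid h G)"
  using assms by (auto intro!: homI simp: transport_monoid_def group.is_monoid monoid.m_closed)

lemma group_transport_monoid:
  assumes "group G" and "inj_on h (carrier G)"
  shows "group (transport_monoid h G)"
  using group.hom_imp_img_group[OF assms(1) hom_transport_monoid[OF assms]]
  by (simp add: transport_monoid_def)

lemma strongly_E_star_unitary_if_group_embeds:
  fixes h :: "'g \<Rightarrow> 'a list" and G :: "('g, 'c) monoid_scheme" and S :: "'a set"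
  assumes "group G" and "inj_on h (carrier G)" and "strongly_E_star_unitary_wrt G S op"
  shows "strongly_E_star_unitary S op"
proof -
  interpret G: group G
    by (rule assms(1))
  obtain \<theta> where \<theta>:
    "\<forall>a\<in>S. \<forall>g. \<theta> a = Some g \<longrightarrow> g \<in> carrier G"
    "\<forall>a\<in>S. \<theta> a = None \<longleftrightarrow> is_zero S op a"
    "\<forall>a\<in>S. \<theta> a = Some \<one>\<^bsub>G\<^esub> \<longleftrightarrow> (\<not> is_zero S op a \<and> op a a = a)"
    "\<forall>a\<in>S. \<forall>b\<in>S. \<not> is_zero S op (op a b) \<longrightarrow> \<theta> (op a b) = zmult G (\<theta> a) (\<theta> b)"
    using assms(3) unfolding strongly_E_star_unitary_wrt_def by blast
  let ?H = "transport_monoid h G"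
  have mult: "zmult ?H (map_option h x) (map_option h y) = map_option h (zmult G x y)"
    if "set_option x \<subseteq> carrier G" "set_option y \<subseteq> carrier G" for x y
    using that assms(2) G.m_closed
    by (cases x; cases y) (simp_all add: zmult_def transport_monoid_def)
  have one: "map_option h (\<theta> a) = Some \<one>\<^bsub>?H\<^esub> \<longleftrightarrow> \<theta> a = Some \<one>\<^bsub>G\<^esub>" if "a \<in> S" for a
    using that \<theta>(1) assms(2) by (cases "\<theta> a") (auto simp: transport_monoid_def inj_on_eq_iff)
  have "strongly_E_star_unitary_wrt ?H S op"
    unfolding strongly_E_star_unitary_wrt_def
  proof (intro exI[of _ "map_option h \<circ> \<theta>"] conjI ballI allI impI)
    show "g \<in> carrier ?H" if "a \<in> S" "(map_option h \<circ> \<theta>) a = Some g" for a g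
      using that \<theta>(1) by (auto simp: transport_monoid_def)
  next
    show "(map_option h \<circ> \<theta>) a = None \<longleftrightarrow> is_zero S op a" if "a \<in> S" for a
      using that \<theta>(2) by simp
  next
    show "(map_option h \<circ> \<theta>) a = Some \<one>\<^bsub>?H\<^esub> \<longleftrightarrow> \<not> is_zero S op a \<and> op a a = a" if "a \<in> S" for a
      using that one \<theta>(3) by simp
  next
    show "(map_option h \<circ> \<theta>) (op a b) = zmult ?H ((map_option h \<circ> \<theta>) a) ((map_option h \<circ> \<theta>) b)"
      if "a \<in> S" "b \<in> S" "\<not> is_zero S op (op a b)" for a b
      using that \<theta>(1,4) mult by (simp add: subset_iff)
  qed
  then show ?thesis
    unfolding strongly_E_star_unitary_def
    using group_transport_monoid[OF assms(1,2)] by blast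
qed

lemma (in group) inv_mult_cancel_common_left:
  assumes "a \<in> carrier G" "b \<in> carrier G" "c \<in> carrier G"
  shows "inv (a \<otimes> b) \<otimes> (a \<otimes> c) = inv b \<otimes> c"
proof -
  have "inv (a \<otimes> b) \<otimes> (a \<otimes> c) = inv b \<otimes> (inv a \<otimes> (a \<otimes> c))"
    using assms by (simp add: inv_mult_group m_assoc)
  also have "\<dots> = inv b \<otimes> c"
    using assms by (simp add: m_assoc[symmetric])
  finally show ?thesis .
qed

lemma (in group) inv_mult_cancel_mid:
  assumes "a \<in> carrier G" "b \<in> carrier G" "c \<in> carrier G"
  shows "(inv a \<otimes> b) \<otimes> (inv b \<otimes> c) = inv a \<otimes> c"
proof -
  have "(inv a \<otimes> b) \<otimes> (inv b \<otimes> c) = inv a \<otimes> (b \<otimes> (inv b \<otimes> c))"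
    using assms by (simp add: m_assoc)
  also have "\<dots> = inv a \<otimes> c"
    using assms by (simp add: m_assoc[symmetric])
  finally show ?thesis .
qed

lemma BijGroup_UNIV_carrier: "carrier (BijGroup UNIV) = {f. bij f}"
  by (simp add: BijGroup_def Bij_def)

lemma BijGroup_UNIV_mult: "bij f \<Longrightarrow> bij g \<Longrightarrow> f \<otimes>\<^bsub>BijGroup UNIV\<^esub> g = f \<circ> g"
  by (simp add: BijGroup_def Bij_def compose_def restrict_def o_def)

definition state_code :: "'v \<times> 'v \<times> rat \<Rightarrow> 'v list" where
  "state_code = (\<lambda>(s, t, q). s # t # replicate (to_nat q) s)"

lemma inj_state_code: "inj state_code"
proof (rule injI)
  fix x y :: "'v \<times> 'v \<times> rat"
  assume "state_code x = state_code y"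
  then show "x = y"
    by (cases x; cases y) (auto simp: state_code_def dest: arg_cong[of _ _ length] injD[OF inj_to_nat])
qed

text \<open>Permutations of the states, recoded as (singleton lists of) partial maps on sets of
  words, as demanded by the type of \<open>strongly_E_star_unitary\<close>.\<close>
definition perm_code :: "('v \<times> 'v \<times> rat \<Rightarrow> 'v \<times> 'v \<times> rat) \<Rightarrow> ('v list set \<rightharpoonup> 'v list set) list" where
  "perm_code f = [\<lambda>K. Some (state_code ` f ` state_code -` K)]"

lemma inj_perm_code: "inj perm_code"
proof (rule injI)
  fix f g :: "'v \<times> 'v \<times> rat \<Rightarrow> 'v \<times> 'v \<times> rat"
  assume "perm_code f = perm_code g"
  then have "state_code ` f ` state_code -` {state_code x} = state_code ` g ` state_code -` {state_code x}" for x
    unfolding perm_code_def by (metis list.inject option.inject)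
  moreover have "state_code -` {state_code x} = {x}" for x
    using inj_state_code by (auto dest: injD)
  ultimately have "state_code (f x) = state_code (g x)" for x
    by (metis image_empty image_insert singleton_inject)
  then show "f = g"
    using inj_state_code by (metis injD ext)
qed

section \<open>The polygraph monoid\<close>

locale polygraph = independence E for E :: "'v \<Rightarrow> 'v \<Rightarrow> bool" +
  fixes V :: "'v set"
begin

abbreviation cls :: "'v list \<Rightarrow> 'v list set" where
  "cls \<equiv> gm_class E"

lemma cls_eq_iff: "cls u = cls w \<longleftrightarrow> u \<simeq> w"
proof
  assume "cls u = cls w"
  then show "u \<simeq> w"
    unfolding gm_class_def by (metis mem_Collect_eq trace_equiv_refl)
next
  assume "u \<simeq> w"
  then show "cls u = cls w"
    unfolding gm_class_def using trace_equiv_trans trace_equiv_sym by blast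
qed

lemma gm_mult_cls: "gm_mult E (cls u) (cls w) = cls (u @ w)"
proof (intro equalityI subsetI)
  fix zs assume "zs \<in> gm_mult E (cls u) (cls w)"
  then obtain xs ys where "u \<simeq> xs" "w \<simeq> ys" "xs @ ys \<simeq> zs"
    unfolding gm_mult_def gm_class_def by auto
  then show "zs \<in> cls (u @ w)"
    unfolding gm_class_def using trace_equiv_append trace_equiv_trans by blast
next
  fix zs assume "zs \<in> cls (u @ w)"
  then show "zs \<in> gm_mult E (cls u) (cls w)"
    unfolding gm_mult_def gm_class_def by force
qed

text \<open>The map \<open>\<rho>\<^sub>a\<^sup>-\<^sup>1\<rho>\<^sub>b\<close> of the paper; it is well defined because the graph monoid is
  right cancellative.\<close>
definition rho_inv_rho :: "'v list \<Rightarrow> 'v list \<Rightarrow> 'v list set \<rightharpoonup> 'v list set" where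
  "rho_inv_rho a b K = (if \<exists>x\<in>lists V. K = cls (x @ a)
     then Some (cls ((SOME x. x \<in> lists V \<and> K = cls (x @ a)) @ b)) else None)"

lemma cls_append_cancel_right: "cls (x @ a) = cls (y @ a) \<Longrightarrow> cls (x @ b) = cls (y @ b)"
  unfolding cls_eq_iff by (metis trace_equiv_append_cancel_right trace_equiv_append trace_equiv_refl)

lemma rho_inv_rho_Some:
  "rho_inv_rho a b K = Some L \<longleftrightarrow> (\<exists>x\<in>lists V. K = cls (x @ a) \<and> L = cls (x @ b))"
proof (cases "\<exists>x\<in>lists V. K = cls (x @ a)")
  case True
  let ?x = "SOME x. x \<in> lists V \<and> K = cls (x @ a)"
  have x: "?x \<in> lists V" "K = cls (?x @ a)"
    using True someI_ex[of "\<lambda>x. x \<in> lists V \<and> K = cls (x @ a)"] by blast+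
  have same: "cls (?x @ b) = cls (y @ b)" if "K = cls (y @ a)" for y
    using that x(2) cls_append_cancel_right by metis
  have rho_K: "rho_inv_rho a b K = Some (cls (?x @ b))"
    using True unfolding rho_inv_rho_def by simp
  show ?thesis
  proof
    assume "rho_inv_rho a b K = Some L"
    with rho_K x show "\<exists>x\<in>lists V. K = cls (x @ a) \<and> L = cls (x @ b)"
      by auto
  next
    assume "\<exists>x\<in>lists V. K = cls (x @ a) \<and> L = cls (x @ b)"
    with rho_K same show "rho_inv_rho a b K = Some L"
      by force
  qed
next
  case False
  then show ?thesis
    unfolding rho_inv_rho_def by auto
qed

lemma rho_inv_rho_self: "a \<in> lists V \<Longrightarrow> rho_inv_rho a b (cls a) = Some (cls b)"
  unfolding rho_inv_rho_Some by (intro bexI[of _ "[]"]) auto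

lemma inj_on_dom_rho_inv_rho: "inj_on (rho_inv_rho a b) (dom (rho_inv_rho a b))"
proof (rule inj_onI)
  fix K K' assume "K \<in> dom (rho_inv_rho a b)" and eq: "rho_inv_rho a b K = rho_inv_rho a b K'"
  then obtain L where "rho_inv_rho a b K = Some L"
    by blast
  moreover from this eq have "rho_inv_rho a b K' = Some L"
    by simp
  ultimately show "K = K'"
    unfolding rho_inv_rho_Some using cls_append_cancel_right by metis
qed

lemma pinv_rho_inv_rho: "pinv (rho_inv_rho a b) = rho_inv_rho b a"
  by (rule map_eqI) (simp only: pinv_Some[OF inj_on_dom_rho_inv_rho] rho_inv_rho_Some, blast)

lemma pmult_rho_inv_rho_Nil: "pmult (rho_inv_rho a []) (rho_inv_rho [] b) = rho_inv_rho a b"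
proof (rule map_eqI)
  fix K N
  show "pmult (rho_inv_rho a []) (rho_inv_rho [] b) K = Some N \<longleftrightarrow> rho_inv_rho a b K = Some N"
  proof
    assume "pmult (rho_inv_rho a []) (rho_inv_rho [] b) K = Some N"
    then obtain x y where x: "x \<in> lists V" "K = cls (x @ a)" and "cls x = cls y" "N = cls (y @ b)"
      unfolding pmult_Some rho_inv_rho_Some by auto
    then have "N = cls (x @ b)"
      using cls_append_cancel_right[of x "[]" y b] by simp
    with x show "rho_inv_rho a b K = Some N"
      unfolding rho_inv_rho_Some by blast
  next
    assume "rho_inv_rho a b K = Some N"
    then obtain x where "x \<in> lists V" "K = cls (x @ a)" "N = cls (x @ b)"
      unfolding rho_inv_rho_Some by blast
    then have "rho_inv_rho a [] K = Some (cls x)" "rho_inv_rho [] b (cls x) = Some N"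
      unfolding rho_inv_rho_Some by (metis append_Nil append_Nil2)+
    then show "pmult (rho_inv_rho a []) (rho_inv_rho [] b) K = Some N"
      unfolding pmult_Some by blast
  qed
qed

lemma right_translation_eq:
  "right_translation (graph_monoid V E) (gm_mult E) (cls c) = rho_inv_rho [] c"
proof (rule map_eqI)
  fix K L
  have "K \<in> graph_monoid V E \<and> L = gm_mult E K (cls c) \<longleftrightarrow>
      (\<exists>x\<in>lists V. K = cls x \<and> L = cls (x @ c))"
    unfolding graph_monoid_def using gm_mult_cls by blast
  then show "right_translation (graph_monoid V E) (gm_mult E) (cls c) K = Some L \<longleftrightarrow>
      rho_inv_rho [] c K = Some L"
    unfolding right_translation_def rho_inv_rho_Some by auto
qed

lemma pid_eq: "pid (graph_monoid V E) = rho_inv_rho [] []"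
proof (rule map_eqI)
  fix K L
  show "pid (graph_monoid V E) K = Some L \<longleftrightarrow> rho_inv_rho [] [] K = Some L"
    unfolding pid_def graph_monoid_def rho_inv_rho_Some by auto
qed

lemma cls_append_cong: "u \<simeq> w \<Longrightarrow> cls (u @ a) = cls (w @ a)"
  by (simp add: cls_eq_iff trace_equiv_append)

lemma pmult_rho_inv_rho:
  "pmult (rho_inv_rho a b) (rho_inv_rho c d) = Map.empty \<or>
    (\<exists>u\<in>lists V. \<exists>v\<in>lists V. pmult (rho_inv_rho a b) (rho_inv_rho c d) = rho_inv_rho (u @ a) (v @ d))"
proof (cases "\<exists>x\<in>lists V. \<exists>y\<in>lists V. x @ b \<simeq> y @ c")
  case False
  have "pmult (rho_inv_rho a b) (rho_inv_rho c d) K = None" for K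
  proof (rule ccontr)
    assume "pmult (rho_inv_rho a b) (rho_inv_rho c d) K \<noteq> None"
    then obtain N where "pmult (rho_inv_rho a b) (rho_inv_rho c d) K = Some N"
      by blast
    then obtain x y where "x \<in> lists V" "y \<in> lists V" "cls (x @ b) = cls (y @ c)"
      unfolding pmult_Some rho_inv_rho_Some by auto
    with False show False
      by (auto simp: cls_eq_iff)
  qed
  then show ?thesis
    by auto
next
  case True
  then obtain x y where x: "x \<in> lists V" and y: "y \<in> lists V" and "x @ b \<simeq> y @ c"
    by blast
  then obtain u v where uv: "u @ b \<simeq> v @ c"
    and least: "\<And>x y. x @ b \<simeq> y @ c \<Longrightarrow> \<exists>s. x \<simeq> s @ u \<and> y \<simeq> s @ v"
    using least_common_left_multiple by blast
  have factor_in_lists: "s \<in> lists V \<and> r \<in> lists V" if "z \<simeq> s @ r" "z \<in> lists V" for z s r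
    using that trace_equiv_set by fastforce
  have "u \<in> lists V" "v \<in> lists V"
    using least[OF \<open>x @ b \<simeq> y @ c\<close>] x y factor_in_lists by blast+
  moreover have "pmult (rho_inv_rho a b) (rho_inv_rho c d) = rho_inv_rho (u @ a) (v @ d)"
  proof (rule map_eqI)
    fix K N
    show "pmult (rho_inv_rho a b) (rho_inv_rho c d) K = Some N \<longleftrightarrow> rho_inv_rho (u @ a) (v @ d) K = Some N"
    proof
      assume "pmult (rho_inv_rho a b) (rho_inv_rho c d) K = Some N"
      then obtain x y where x: "x \<in> lists V" "K = cls (x @ a)" "N = cls (y @ d)"
        and "cls (x @ b) = cls (y @ c)"
        unfolding pmult_Some rho_inv_rho_Some by auto
      then obtain s where "x \<simeq> s @ u" "y \<simeq> s @ v"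
        using least by (metis cls_eq_iff)
      with x factor_in_lists show "rho_inv_rho (u @ a) (v @ d) K = Some N"
        unfolding rho_inv_rho_Some by (metis append_assoc cls_append_cong)
    next
      assume "rho_inv_rho (u @ a) (v @ d) K = Some N"
      then obtain s where s: "s \<in> lists V" "K = cls ((s @ u) @ a)" "N = cls ((s @ v) @ d)"
        unfolding rho_inv_rho_Some by auto
      have "cls ((s @ u) @ b) = cls ((s @ v) @ c)"
        using trace_equiv_append[OF trace_equiv_refl[of s] uv] by (simp add: cls_eq_iff)
      with s \<open>u \<in> lists V\<close> \<open>v \<in> lists V\<close> show "pmult (rho_inv_rho a b) (rho_inv_rho c d) K = Some N"
        unfolding pmult_Some rho_inv_rho_Some by (metis append_in_lists_conv)
    qed
  qed
  ultimately show ?thesis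
    by blast
qed

abbreviation PG :: "('v list set \<rightharpoonup> 'v list set) set" where
  "PG \<equiv> polygraph_monoid V E"

lemma rho_inv_rho_mem: "a \<in> lists V \<Longrightarrow> b \<in> lists V \<Longrightarrow> rho_inv_rho a b \<in> PG"
proof -
  have generator: "rho_inv_rho [] c \<in> inverse_hull (graph_monoid V E) (gm_mult E)" if "c \<in> lists V" for c
  proof -
    have "cls c \<in> graph_monoid V E"
      using that unfolding graph_monoid_def by blast
    then show ?thesis
      unfolding inverse_hull_def using right_translation_eq[of c]
      by (metis image_eqI inv_submonoid_gen.gen_gen)
  qed
  assume "a \<in> lists V" "b \<in> lists V"
  then have "pmult (pinv (rho_inv_rho [] a)) (rho_inv_rho [] b) \<in> inverse_hull (graph_monoid V E) (gm_mult E)"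
    using generator unfolding inverse_hull_def
    by (intro inv_submonoid_gen.gen_mult inv_submonoid_gen.gen_inv) auto
  then show ?thesis
    unfolding polygraph_monoid_def inverse_hull0_def pinv_rho_inv_rho pmult_rho_inv_rho_Nil
    by blast
qed

lemma polygraph_monoid_eq:
  "PG = insert Map.empty {rho_inv_rho a b | a b. a \<in> lists V \<and> b \<in> lists V}"
proof (intro equalityI subsetI)
  fix f assume "f \<in> PG"
  then have "f = Map.empty \<or> f \<in> inverse_hull (graph_monoid V E) (gm_mult E)"
    unfolding polygraph_monoid_def inverse_hull0_def by blast
  moreover have "f \<in> insert Map.empty {rho_inv_rho a b | a b. a \<in> lists V \<and> b \<in> lists V}"
    if "f \<in> inverse_hull (graph_monoid V E) (gm_mult E)"
    using that unfolding inverse_hull_def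
  proof (induction rule: inv_submonoid_gen.induct)
    case gen_id
    then show ?case
      using pid_eq by auto
  next
    case (gen_gen f)
    then obtain c where "c \<in> lists V" "f = right_translation (graph_monoid V E) (gm_mult E) (cls c)"
      unfolding graph_monoid_def by blast
    then show ?case
      using right_translation_eq by blast
  next
    case (gen_mult f g)
    show ?case
    proof (cases "f = Map.empty \<or> g = Map.empty")
      case False
      with gen_mult.IH obtain a b c d where "f = rho_inv_rho a b" "g = rho_inv_rho c d"
        and "a \<in> lists V" "d \<in> lists V"
        by blast
      with pmult_rho_inv_rho[of a b c d] consider "pmult f g = Map.empty"
        | u v where "u \<in> lists V" "v \<in> lists V" "pmult f g = rho_inv_rho (u @ a) (v @ d)"
        by blast
      then show ?thesis
      proof cases
        case 2
        with \<open>a \<in> lists V\<close> \<open>d \<in> lists V\<close> show ?thesis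
          by (metis (mono_tags, lifting) CollectI append_in_lists_conv insertCI)
      qed simp
    qed auto
  next
    case (gen_inv f)
    then show ?case
      using pinv_rho_inv_rho by auto
  qed
  ultimately show "f \<in> insert Map.empty {rho_inv_rho a b | a b. a \<in> lists V \<and> b \<in> lists V}"
    by blast
next
  fix f assume "f \<in> insert Map.empty {rho_inv_rho a b | a b. a \<in> lists V \<and> b \<in> lists V}"
  moreover have "Map.empty \<in> PG"
    unfolding polygraph_monoid_def inverse_hull0_def by blast
  ultimately show "f \<in> PG"
    using rho_inv_rho_mem by blast
qed

sublocale partial_bijection_monoid PG
proof
  show "Map.empty \<in> PG"
    unfolding polygraph_monoid_def inverse_hull0_def by blast
  show "inj_on f (dom f)" if "f \<in> PG" for f
    using that inj_on_dom_rho_inv_rho unfolding polygraph_monoid_eq by auto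
  show "pmult f g \<in> PG" if "f \<in> PG" "g \<in> PG" for f g
    using that unfolding polygraph_monoid_def inverse_hull0_def inverse_hull_def
    by (auto intro: inv_submonoid_gen.gen_mult)
  show "pinv f \<in> PG" if "f \<in> PG" for f
    using that unfolding polygraph_monoid_def inverse_hull0_def inverse_hull_def
    by (auto intro: inv_submonoid_gen.gen_inv)
qed

lemma rho_inv_rho_map_le_iff:
  assumes "a \<in> lists V"
  shows "rho_inv_rho a b \<subseteq>\<^sub>m rho_inv_rho c d \<longleftrightarrow> (\<exists>z\<in>lists V. a \<simeq> z @ c \<and> b \<simeq> z @ d)"
proof
  assume "rho_inv_rho a b \<subseteq>\<^sub>m rho_inv_rho c d"
  then have "rho_inv_rho c d (cls a) = Some (cls b)"
    using rho_inv_rho_self[OF assms] unfolding map_le_def by (metis domI)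
  then show "\<exists>z\<in>lists V. a \<simeq> z @ c \<and> b \<simeq> z @ d"
    unfolding rho_inv_rho_Some cls_eq_iff .
next
  assume "\<exists>z\<in>lists V. a \<simeq> z @ c \<and> b \<simeq> z @ d"
  then obtain z where z: "z \<in> lists V" "a \<simeq> z @ c" "b \<simeq> z @ d"
    by blast
  show "rho_inv_rho a b \<subseteq>\<^sub>m rho_inv_rho c d"
    unfolding map_le_def
  proof
    fix K assume "K \<in> dom (rho_inv_rho a b)"
    then obtain L where L: "rho_inv_rho a b K = Some L"
      by blast
    then obtain x where x: "x \<in> lists V" "K = cls (x @ a)" "L = cls (x @ b)"
      unfolding rho_inv_rho_Some by blast
    have "K = cls ((x @ z) @ c)" "L = cls ((x @ z) @ d)"
      using x(2,3) trace_equiv_append[OF trace_equiv_refl[of x]] z(2,3) by (simp_all add: cls_eq_iff)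
    with x(1) z(1) have "rho_inv_rho c d K = Some L"
      unfolding rho_inv_rho_Some by (metis append_in_lists_conv)
    with L show "rho_inv_rho a b K = rho_inv_rho c d K"
      by simp
  qed
qed

lemma greatest_above_rho_inv_rho:
  assumes "a \<in> lists V" and "b \<in> lists V"
  shows "\<exists>m\<in>PG. rho_inv_rho a b \<subseteq>\<^sub>m m \<and> (\<forall>n\<in>PG. rho_inv_rho a b \<subseteq>\<^sub>m n \<longrightarrow> n \<subseteq>\<^sub>m m)"
proof -
  obtain g where g: "g \<preceq> a" "g \<preceq> b" "\<And>h. h \<preceq> a \<Longrightarrow> h \<preceq> b \<Longrightarrow> h \<preceq> g"
    using left_gcd_exists by blast
  obtain a' b' where a': "a \<simeq> g @ a'" and b': "b \<simeq> g @ b'"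
    using g(1,2) unfolding ldvd_def by blast
  have "g \<in> lists V" "a' \<in> lists V" "b' \<in> lists V"
    using trace_equiv_set[OF a'] trace_equiv_set[OF b'] assms by auto
  have above: "rho_inv_rho a b \<subseteq>\<^sub>m rho_inv_rho a' b'"
    using rho_inv_rho_map_le_iff[OF assms(1)] \<open>g \<in> lists V\<close> a' b' by blast
  have "n \<subseteq>\<^sub>m rho_inv_rho a' b'" if n_mem: "n \<in> PG" and n_above: "rho_inv_rho a b \<subseteq>\<^sub>m n" for n
  proof -
    have "n \<noteq> Map.empty"
      using n_above rho_inv_rho_self[OF assms(1)] unfolding map_le_def by (metis domI option.distinct(1))
    then obtain c d where c: "c \<in> lists V" and n: "n = rho_inv_rho c d"
      using n_mem unfolding polygraph_monoid_eq by blast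
    then obtain z where z: "a \<simeq> z @ c" "b \<simeq> z @ d"
      using n_above rho_inv_rho_map_le_iff[OF assms(1)] by blast
    then have "z \<preceq> g"
      using g(3) unfolding ldvd_def by blast
    then obtain z' where z': "g \<simeq> z @ z'"
      unfolding ldvd_def by blast
    have "z' \<in> lists V"
      using trace_equiv_set[OF z'] \<open>g \<in> lists V\<close> by auto
    have "z @ c \<simeq> z @ z' @ a'" "z @ d \<simeq> z @ z' @ b'"
      using trace_equiv_sym[OF z(1)] trace_equiv_sym[OF z(2)] a' b'
        trace_equiv_append[OF z' trace_equiv_refl]
      by (simp_all, (metis append_assoc trace_equiv_trans)+)
    then have "c \<simeq> z' @ a'" "d \<simeq> z' @ b'"
      by (simp_all add: trace_equiv_append_cancel_left)
    with n c \<open>z' \<in> lists V\<close> show ?thesis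
      using rho_inv_rho_map_le_iff by blast
  qed
  with above rho_inv_rho_mem \<open>a' \<in> lists V\<close> \<open>b' \<in> lists V\<close> show ?thesis
    by blast
qed

lemma F_star_inverse_polygraph_monoid: "F_star_inverse PG pmult"
proof (rule F_star_inverse_if_greatest_above)
  fix f assume "f \<in> PG" "f \<noteq> Map.empty"
  then obtain a b where "a \<in> lists V" "b \<in> lists V" "f = rho_inv_rho a b"
    unfolding polygraph_monoid_eq by blast
  then show "\<exists>m\<in>PG. f \<subseteq>\<^sub>m m \<and> (\<forall>n\<in>PG. f \<subseteq>\<^sub>m n \<longrightarrow> n \<subseteq>\<^sub>m m)"
    using greatest_above_rho_inv_rho by blast
qed

abbreviation Sym :: "('v \<times> 'v \<times> rat \<Rightarrow> 'v \<times> 'v \<times> rat) monoid" where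
  "Sym \<equiv> BijGroup UNIV"

lemma word_action_carrier: "word_action w \<in> carrier Sym"
  by (simp add: BijGroup_UNIV_carrier bij_word_action)

lemma word_action_append_Sym: "word_action (u @ w) = word_action u \<otimes>\<^bsub>Sym\<^esub> word_action w"
  by (simp add: BijGroup_UNIV_mult bij_word_action word_action_append)

definition theta :: "('v list set \<rightharpoonup> 'v list set) \<Rightarrow> ('v \<times> 'v \<times> rat \<Rightarrow> 'v \<times> 'v \<times> rat) option" where
  "theta f = (if f = Map.empty then None else
     Some (let p = SOME p. fst p \<in> lists V \<and> snd p \<in> lists V \<and> f = rho_inv_rho (fst p) (snd p)
           in inv\<^bsub>Sym\<^esub> word_action (fst p) \<otimes>\<^bsub>Sym\<^esub> word_action (snd p)))"

lemma theta_eq: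
  assumes "f \<in> PG" and "f (cls x) = Some (cls y)"
  shows "theta f = Some (inv\<^bsub>Sym\<^esub> word_action x \<otimes>\<^bsub>Sym\<^esub> word_action y)"
proof -
  interpret Sym: group Sym
    by (rule group_BijGroup)
  have "f \<noteq> Map.empty"
    using assms(2) by auto
  then have "\<exists>p. fst p \<in> lists V \<and> snd p \<in> lists V \<and> f = rho_inv_rho (fst p) (snd p)"
    using assms(1) unfolding polygraph_monoid_eq by auto
  then obtain a b where ab: "theta f = Some (inv\<^bsub>Sym\<^esub> word_action a \<otimes>\<^bsub>Sym\<^esub> word_action b)"
    and f: "f = rho_inv_rho a b"
    unfolding theta_def using \<open>f \<noteq> Map.empty\<close> by (metis (mono_tags, lifting) someI_ex)
  obtain z where "x \<simeq> z @ a" "y \<simeq> z @ b"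
    using assms(2) unfolding f rho_inv_rho_Some cls_eq_iff by blast
  then have "word_action x = word_action z \<otimes>\<^bsub>Sym\<^esub> word_action a"
    "word_action y = word_action z \<otimes>\<^bsub>Sym\<^esub> word_action b"
    by (simp_all add: word_action_eq_iff word_action_append_Sym[symmetric])
  then show ?thesis
    using ab Sym.inv_mult_cancel_common_left word_action_carrier by simp
qed

lemma polygraph_monoid_Some_cls:
  assumes "f \<in> PG" and "f K = Some L"
  shows "\<exists>x y. K = cls x \<and> L = cls y"
proof -
  obtain a b where "f = rho_inv_rho a b"
    using assms unfolding polygraph_monoid_eq by auto
  with assms(2) show ?thesis
    by (auto simp: rho_inv_rho_Some)
qed

lemma rho_inv_rho_idempotent_iff:
  assumes "p \<in> lists V"
  shows "pmult (rho_inv_rho p q) (rho_inv_rho p q) = rho_inv_rho p q \<longleftrightarrow> p \<simeq> q"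
proof
  assume "pmult (rho_inv_rho p q) (rho_inv_rho p q) = rho_inv_rho p q"
  then have "cls q = cls p"
    using idempotent_map_le_id[OF inj_on_dom_rho_inv_rho _ rho_inv_rho_self[OF assms]] by blast
  then show "p \<simeq> q"
    by (simp add: cls_eq_iff trace_equiv_sym)
next
  assume "p \<simeq> q"
  then have "cls (x @ q) = cls (x @ p)" for x
    by (simp add: cls_eq_iff trace_equiv_append trace_equiv_sym)
  then have diagonal: "rho_inv_rho p q K = Some L \<longleftrightarrow> L = K \<and> (\<exists>x\<in>lists V. K = cls (x @ p))" for K L
    unfolding rho_inv_rho_Some by auto
  show "pmult (rho_inv_rho p q) (rho_inv_rho p q) = rho_inv_rho p q"
    by (rule map_eqI) (auto simp only: pmult_Some diagonal)
qed

lemma theta_eq_one_iff: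
  assumes f: "f \<in> PG"
  shows "theta f = Some \<one>\<^bsub>Sym\<^esub> \<longleftrightarrow> f \<noteq> Map.empty \<and> pmult f f = f"
proof (cases "f = Map.empty")
  case False
  interpret Sym: group Sym
    by (rule group_BijGroup)
  obtain p q where pq: "p \<in> lists V" "f = rho_inv_rho p q"
    using f False unfolding polygraph_monoid_eq by blast
  then have "theta f = Some (inv\<^bsub>Sym\<^esub> word_action p \<otimes>\<^bsub>Sym\<^esub> word_action q)"
    using theta_eq[OF f] rho_inv_rho_self by blast
  then have "theta f = Some \<one>\<^bsub>Sym\<^esub> \<longleftrightarrow> word_action q = word_action p"
    using word_action_carrier Sym.inv_solve_left' by auto
  then show ?thesis
    using False pq rho_inv_rho_idempotent_iff trace_equiv_sym by (auto simp: word_action_eq_iff)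
qed (simp add: theta_def)

lemma theta_pmult:
  assumes f: "f \<in> PG" and g: "g \<in> PG" and "pmult f g \<noteq> Map.empty"
  shows "theta (pmult f g) = zmult Sym (theta f) (theta g)"
proof -
  interpret Sym: group Sym
    by (rule group_BijGroup)
  obtain K M where KM: "pmult f g K = Some M"
    using assms(3) by fastforce
  then obtain L where "f K = Some L" "g L = Some M"
    unfolding pmult_Some by blast
  moreover obtain x y z where "K = cls x" "L = cls y" "M = cls z"
    using calculation polygraph_monoid_Some_cls[OF f] polygraph_monoid_Some_cls[OF g] by metis
  ultimately show ?thesis
    using theta_eq[OF f] theta_eq[OF g] theta_eq[OF pmult_closed[OF f g]] KM
      Sym.inv_mult_cancel_mid word_action_carrier
    by (simp add: zmult_def)
qed

lemma strongly_E_star_unitary_wrt_Sym: "strongly_E_star_unitary_wrt Sym PG pmult"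
  unfolding strongly_E_star_unitary_wrt_def
proof (intro exI[of _ theta] conjI ballI allI impI)
  interpret Sym: group Sym
    by (rule group_BijGroup)
  fix f assume f: "f \<in> PG"
  show "g \<in> carrier Sym" if "theta f = Some g" for g
    using that word_action_carrier unfolding theta_def by (auto simp: Let_def split: if_splits)
  show "theta f = None \<longleftrightarrow> is_zero PG pmult f"
    using is_zero_iff[OF f] unfolding theta_def by simp
  show "theta f = Some \<one>\<^bsub>Sym\<^esub> \<longleftrightarrow> \<not> is_zero PG pmult f \<and> pmult f f = f"
    using theta_eq_one_iff[OF f] is_zero_iff[OF f] by simp
next
  fix f g assume "f \<in> PG" "g \<in> PG" "\<not> is_zero PG pmult (pmult f g)"
  then show "theta (pmult f g) = zmult Sym (theta f) (theta g)"
    using theta_pmult is_zero_iff pmult_closed by blast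
qed

lemma strongly_E_star_unitary_polygraph_monoid: "strongly_E_star_unitary PG pmult"
  using strongly_E_star_unitary_if_group_embeds[OF group_BijGroup _ strongly_E_star_unitary_wrt_Sym]
    inj_perm_code by (blast intro: inj_on_subset)

end

theorem corollary4p6:
  fixes V :: "'v set" and E :: "'v \<Rightarrow> 'v \<Rightarrow> bool"
  assumes "\<forall>u. \<not> E u u"
    and "\<forall>u v. E u v \<longrightarrow> E v u"
    and "\<forall>u v. E u v \<longrightarrow> u \<in> V \<and> v \<in> V"
  shows "strongly_F_star_inverse (polygraph_monoid V E) pmult"
proof -
  interpret polygraph E V
    using assms(1,2) by unfold_locales blast+
  show ?thesis
    unfolding strongly_F_star_inverse_def
    using F_star_inverse_polygraph_monoid strongly_E_star_unitary_polygraph_monoid by blast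
qed

end
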